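(* Let $0<\varepsilon_s<1/2$, $0<\varepsilon_a<1/2$ and $0<\varepsilon_{small}\le\varepsilon_s/2$. Let $\tilde M$ be a finite set of rectangles with $w(i)\le\varepsilon_{small}N$ and $h(i)\le N$ for all $i\in\tilde M$, and with $a(\tilde M)\le(\frac12+\varepsilon_a)N^2$. Then a subset of $\tilde M$ of cardinality at least $(1-2\varepsilon_s-2\varepsilon_a)|\tilde M|$ can be packed (without rotations, with pairwise disjoint interiors) into $[0,(1-\varepsilon_s)N]\times[0,N]$.
   Context: Rectangles are axis-parallel with width $w(i)$ and height $h(i)$; $a(S)=\sum_{i\in S}w(i)h(i)$. *)

theory Defs
  imports Complex_Main
begin

definition area :: "('a \<Rightarrow> real) \<Rightarrow> ('a \<Rightarrow> real) \<Rightarrow> 'a set \<Rightarrow> real" where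
  "area w h S = (\<Sum>i\<in>S. w i * h i)"

definition rect_interior :: "real \<Rightarrow> real \<Rightarrow> real \<Rightarrow> real \<Rightarrow> (real \<times> real) set" where
  "rect_interior x y wd ht = {x<..<x + wd} \<times> {y<..<y + ht}"

definition packable :: "('a \<Rightarrow> real) \<Rightarrow> ('a \<Rightarrow> real) \<Rightarrow> 'a set \<Rightarrow> real \<Rightarrow> real \<Rightarrow> bool" where
  "packable w h S W H \<longleftrightarrow>
     (\<exists>px py :: 'a \<Rightarrow> real.
        (\<forall>i\<in>S. 0 \<le> px i \<and> px i + w i \<le> W \<and> 0 \<le> py i \<and> py i + h i \<le> H) \<and>
        (\<forall>i\<in>S. \<forall>j\<in>S. i \<noteq> j \<longrightarrow>
            rect_interior (px i) (py i) (w i) (h i) \<inter> rect_interior (px j) (py j) (w j) (h j) = {}))"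

end

theory Submission
  imports Defs
begin

text \<open>
  In a strip of height \<open>H\<close>, charge a rectangle \<open>w\<cdot>H\<close> if it is tall (\<open>h > H/2\<close>) and
  \<open>2\<cdot>w\<cdot>h\<close> otherwise; the charge is at most twice the area. Rectangles of width at most \<open>D\<close>
  and total charge at most \<open>(W - D)\<cdot>H\<close> fit into width \<open>W\<close>, packed column by column: a tall
  rectangle gets a column of its own, otherwise the widest short rectangles are stacked until their
  heights exceed \<open>H/2\<close>. Either way a column of width \<open>wc\<close> has charge at least
  \<open>(wc + D' - D)\<cdot>H\<close>, where \<open>D'\<close> bounds the widths left over, so the remaining budget
  \<open>(W - wc - D')\<cdot>H\<close> suffices for the rest. By averaging, some \<open>\<lceil>x\<cdot>|M|\<rceil>\<close> rectangles,
  \<open>x = 1 - 2\<cdot>eps_s - 2\<cdot>eps_a\<close>, have charge at most \<open>x\<cdot>(1 + 2\<cdot>eps_a)\<cdot>N\<^sup>2\<close> plus one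
  rectangle's charge \<open>\<le> eps_small\<cdot>N\<^sup>2\<close>, which is within the budget for \<open>W = (1 - eps_s)\<cdot>N\<close>
  and \<open>D = eps_small\<cdot>N\<close>.
\<close>

definition is_packing :: "('a \<Rightarrow> real) \<Rightarrow> ('a \<Rightarrow> real) \<Rightarrow> ('a \<Rightarrow> real) \<Rightarrow> ('a \<Rightarrow> real)
    \<Rightarrow> 'a set \<Rightarrow> real \<Rightarrow> real \<Rightarrow> real \<Rightarrow> bool" where
  "is_packing w h px py S a b H \<longleftrightarrow>
     (\<forall>i\<in>S. a \<le> px i \<and> px i + w i \<le> b \<and> 0 \<le> py i \<and> py i + h i \<le> H) \<and>
     (\<forall>i\<in>S. \<forall>j\<in>S. i \<noteq> j \<longrightarrow>
        rect_interior (px i) (py i) (w i) (h i) \<inter> rect_interior (px j) (py j) (w j) (h j) = {})"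

lemma packable_iff_is_packing: "packable w h S W H \<longleftrightarrow> (\<exists>px py. is_packing w h px py S 0 W H)"
  unfolding packable_def is_packing_def by simp

lemma rect_interior_disjoint_horizontal:
  "x + wd \<le> x' \<Longrightarrow> rect_interior x y wd ht \<inter> rect_interior x' y' wd' ht' = {}"
  by (auto simp: rect_interior_def)

lemma rect_interior_disjoint_vertical:
  "y + ht \<le> y' \<Longrightarrow> rect_interior x y wd ht \<inter> rect_interior x' y' wd' ht' = {}"
  by (auto simp: rect_interior_def)

lemma is_packing_mono: "is_packing w h px py S a b H \<Longrightarrow> b \<le> b' \<Longrightarrow> is_packing w h px py S a b' H"
  unfolding is_packing_def by force

lemma is_packing_Un:
  assumes C: "is_packing w h px1 py1 C x0 x1 H" and R: "is_packing w h px2 py2 R x1 x2 H"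
    and "C \<inter> R = {}" "x0 \<le> x1" "x1 \<le> x2"
  shows "\<exists>px py. is_packing w h px py (C \<union> R) x0 x2 H"
proof -
  define px where "px i = (if i \<in> C then px1 i else px2 i)" for i
  define py where "py i = (if i \<in> C then py1 i else py2 i)" for i
  have left_of: "px i + w i \<le> px j" if "i \<in> C" "j \<in> R" for i j
  proof -
    have "px1 i + w i \<le> x1" "x1 \<le> px2 j" "j \<notin> C"
      using that C R assms(3) unfolding is_packing_def by blast+
    with that(1) show ?thesis unfolding px_def by simp
  qed
  have disjoint: "rect_interior (px i) (py i) (w i) (h i) \<inter> rect_interior (px j) (py j) (w j) (h j) = {}"
    if ij: "i \<in> C \<union> R" "j \<in> C \<union> R" "i \<noteq> j" for i j
  proof -
    consider "i \<in> C" "j \<in> C" | "i \<in> C" "j \<in> R" | "j \<in> C" "i \<in> R" | "i \<notin> C" "j \<notin> C" "i \<in> R" "j \<in> R"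
      using ij by blast
    then show ?thesis
    proof cases
      case 1
      then show ?thesis using C ij(3) unfolding is_packing_def px_def py_def by simp
    next
      case 2
      then show ?thesis by (intro rect_interior_disjoint_horizontal left_of)
    next
      case 3
      then show ?thesis by (subst Int_commute) (intro rect_interior_disjoint_horizontal left_of)
    next
      case 4
      then show ?thesis using R ij(3) unfolding is_packing_def px_def py_def by simp
    qed
  qed
  have inside: "x0 \<le> px i \<and> px i + w i \<le> x2 \<and> 0 \<le> py i \<and> py i + h i \<le> H" if "i \<in> C \<union> R" for i
  proof (cases "i \<in> C")
    case True
    then show ?thesis using C assms(5) unfolding is_packing_def px_def py_def by force
  next
    case False
    then show ?thesis using that R assms(4) unfolding is_packing_def px_def py_def by force
  qed
  have "is_packing w h px py (C \<union> R) x0 x2 H"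
    unfolding is_packing_def using disjoint inside by blast
  then show ?thesis by blast
qed

lemma exists_stacking:
  fixes h :: "'a \<Rightarrow> real"
  assumes "finite C" "\<forall>i\<in>C. 0 \<le> h i"
  shows "\<exists>py. (\<forall>i\<in>C. 0 \<le> py i \<and> py i + h i \<le> sum h C) \<and>
     (\<forall>i\<in>C. \<forall>j\<in>C. i \<noteq> j \<longrightarrow> py i + h i \<le> py j \<or> py j + h j \<le> py i)"
  using assms
proof (induction C rule: finite_induct)
  case empty
  then show ?case by simp
next
  case (insert a F)
  then obtain py where py: "\<forall>i\<in>F. 0 \<le> py i \<and> py i + h i \<le> sum h F"
     "\<forall>i\<in>F. \<forall>j\<in>F. i \<noteq> j \<longrightarrow> py i + h i \<le> py j \<or> py j + h j \<le> py i"
    by auto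
  have "0 \<le> sum h F" "0 \<le> h a"
    using insert.prems by (auto intro: sum_nonneg)
  with py insert.hyps show ?case
    by (intro exI[of _ "py(a := sum h F)"]) auto
qed

lemma exists_column_packing:
  assumes "finite C" "\<forall>i\<in>C. 0 \<le> h i \<and> w i \<le> wc" "sum h C \<le> H"
  shows "\<exists>px py. is_packing w h px py C x0 (x0 + wc) H"
proof -
  obtain py where py: "\<forall>i\<in>C. 0 \<le> py i \<and> py i + h i \<le> sum h C"
     "\<forall>i\<in>C. \<forall>j\<in>C. i \<noteq> j \<longrightarrow> py i + h i \<le> py j \<or> py j + h j \<le> py i"
    using exists_stacking[of C h] assms(1,2) by auto
  have "rect_interior x0 (py i) (w i) (h i) \<inter> rect_interior x0 (py j) (w j) (h j) = {}"
    if "i \<in> C" "j \<in> C" "i \<noteq> j" for i j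
    using py(2) that by (metis Int_commute rect_interior_disjoint_vertical)
  then have "is_packing w h (\<lambda>_. x0) py C x0 (x0 + wc) H"
    unfolding is_packing_def using py(1) assms(2,3) by fastforce
  then show ?thesis by blast
qed

lemma finite_ex_maximizer:
  fixes f :: "'a \<Rightarrow> 'b::linorder"
  assumes "finite S" "S \<noteq> {}"
  obtains m where "m \<in> S" "\<forall>x\<in>S. f x \<le> f m"
proof -
  have "Max (f ` S) \<in> f ` S"
    using assms by simp
  then obtain m where "m \<in> S" "f m = Max (f ` S)"
    by (metis imageE)
  with assms(1) show thesis
    using that by simp
qed

lemma exists_widest_subset_height_between:
  fixes w h :: "'a \<Rightarrow> real"
  assumes "finite T" "\<forall>i\<in>T. 0 < h i \<and> h i \<le> H'" "0 \<le> s" "s < sum h T"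
  shows "\<exists>C\<subseteq>T. s < sum h C \<and> sum h C \<le> s + H' \<and> (\<forall>i\<in>C. \<forall>j\<in>T - C. w j \<le> w i)"
  using assms
proof (induction T arbitrary: s rule: finite_remove_induct)
  case empty
  then show ?case by simp
next
  case (remove T)
  obtain m where m: "m \<in> T" "\<forall>j\<in>T. w j \<le> w m"
    using finite_ex_maximizer[OF remove.hyps(1,2)] by blast
  show ?case
  proof (cases "s < h m")
    case True
    then show ?thesis using m remove.prems by (intro exI[of _ "{m}"]) auto
  next
    case False
    have "sum h T = h m + sum h (T - {m})"
      using m(1) remove.hyps(1) by (simp add: sum.remove)
    then obtain C where C: "C \<subseteq> T - {m}" "s - h m < sum h C" "sum h C \<le> s - h m + H'"
        "\<forall>i\<in>C. \<forall>j\<in>T - {m} - C. w j \<le> w i"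
      using remove.IH[OF m(1), of "s - h m"] remove.prems False by auto
    moreover have "sum h (insert m C) = h m + sum h C"
      using C(1) remove.hyps(1) by (subst sum.insert) (auto dest: finite_subset)
    ultimately show ?thesis
      using m by (intro exI[of _ "insert m C"]) auto
  qed
qed

lemma exists_subset_card_eq_sum_le:
  fixes c :: "'a \<Rightarrow> real"
  assumes "finite M" "k \<le> card M"
  shows "\<exists>S\<subseteq>M. card S = k \<and> real (card M) * sum c S \<le> real k * sum c M"
  using assms
proof (induction M arbitrary: k rule: finite_remove_induct)
  case empty
  then show ?case by simp
next
  case (remove M)
  show ?case
  proof (cases "k = card M")
    case True
    then show ?thesis by auto
  next
    case False
    obtain m where m: "m \<in> M" "\<forall>j\<in>M. c j \<le> c m"
      using finite_ex_maximizer[OF remove.hyps(1,2)] by blast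
    have card_M: "card M = card (M - {m}) + 1"
      using m(1) remove.hyps(1) card_Suc_Diff1 by fastforce
    then obtain S where S: "S \<subseteq> M - {m}" "card S = k"
        "real (card (M - {m})) * sum c S \<le> real k * sum c (M - {m})"
      using remove.IH[OF m(1), of k] remove.prems False by auto
    have "sum c S \<le> real k * c m"
      using sum_bounded_above[of S c "c m"] S m by auto
    moreover have "sum c M = c m + sum c (M - {m})"
      using m(1) remove.hyps(1) by (simp add: sum.remove)
    ultimately have "real (card M) * sum c S \<le> real k * sum c M"
      using S(3) card_M by (simp add: algebra_simps)
    then show ?thesis using S by auto
  qed
qed

definition strip_cost :: "real \<Rightarrow> ('a \<Rightarrow> real) \<Rightarrow> ('a \<Rightarrow> real) \<Rightarrow> 'a \<Rightarrow> real" where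
  "strip_cost H w h i = (if h i > H/2 then w i * H else 2 * w i * h i)"

lemma strip_cost_nonneg: "0 \<le> w i \<Longrightarrow> 0 \<le> h i \<Longrightarrow> 0 \<le> H \<Longrightarrow> 0 \<le> strip_cost H w h i"
  unfolding strip_cost_def by simp

lemma strip_cost_le_double_area:
  assumes "0 \<le> w i"
  shows "strip_cost H w h i \<le> 2 * (w i * h i)"
proof -
  have "w i * H \<le> w i * (2 * h i)" if "H/2 < h i"
    using that assms by (intro mult_left_mono) auto
  then show ?thesis
    unfolding strip_cost_def by auto
qed

lemma strip_cost_le_width:
  assumes "0 \<le> w i"
  shows "strip_cost H w h i \<le> w i * H"
proof -
  have "w i * (2 * h i) \<le> w i * H" if "\<not> H/2 < h i"
    using that assms by (intro mult_left_mono) auto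
  then show ?thesis
    unfolding strip_cost_def by auto
qed

lemma exists_short_column:
  assumes "finite T" "0 < H" "\<forall>i\<in>T. 0 < w i \<and> 0 < h i \<and> h i \<le> H/2" "H < sum h T"
  shows "\<exists>C j. C \<subseteq> T \<and> C \<noteq> {} \<and> sum h C \<le> H \<and> j \<in> T - C \<and> (\<forall>i\<in>T - C. w i \<le> w j) \<and>
           w j * H \<le> sum (strip_cost H w h) C"
proof -
  obtain C where C: "C \<subseteq> T" "H/2 < sum h C" "sum h C \<le> H/2 + H/2" "\<forall>i\<in>C. \<forall>j\<in>T - C. w j \<le> w i"
    using exists_widest_subset_height_between[of T h "H/2" "H/2" w] assms by auto
  have "T - C \<noteq> {}"
    using C(1,3) assms(4) by auto
  then obtain j where j: "j \<in> T - C" "\<forall>i\<in>T - C. w i \<le> w j"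
    using finite_ex_maximizer[of "T - C" w] assms(1) by blast
  have "w j * H = w j * (2 * (H/2))"
    by simp
  also have "\<dots> \<le> w j * (2 * sum h C)"
    using C(2) j(1) assms(3) by (intro mult_left_mono) auto
  also have "\<dots> = (\<Sum>i\<in>C. 2 * w j * h i)"
    by (simp add: sum_distrib_left mult.assoc mult.left_commute)
  also have "\<dots> \<le> (\<Sum>i\<in>C. strip_cost H w h i)"
  proof (rule sum_mono)
    fix i assume "i \<in> C"
    with C(1) have "i \<in> T" by blast
    with \<open>i \<in> C\<close> have "w j \<le> w i" "0 < h i" "\<not> H/2 < h i"
      using C(4) j(1) assms(3) by auto
    then show "2 * w j * h i \<le> strip_cost H w h i"
      unfolding strip_cost_def by simp
  qed
  finally have "w j * H \<le> sum (strip_cost H w h) C" .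
  moreover have "C \<noteq> {}"
    using C(2) assms(2) by auto
  ultimately show ?thesis
    using C(1,3) j by auto
qed

lemma exists_first_column:
  assumes "finite T" "0 < H" "\<forall>i\<in>T. 0 < w i \<and> w i \<le> D \<and> 0 < h i \<and> h i \<le> H"
    and "H < sum h T"
  shows "\<exists>C wc D'. C \<subseteq> T \<and> C \<noteq> {} \<and> sum h C \<le> H \<and> 0 \<le> wc \<and> (\<forall>i\<in>C. w i \<le> wc) \<and>
           0 \<le> D' \<and> (\<forall>i\<in>T - C. w i \<le> D') \<and> (wc + D' - D) * H \<le> sum (strip_cost H w h) C"
proof (cases "\<exists>m\<in>T. H/2 < h m")
  case True
  then obtain m where m: "m \<in> T" "H/2 < h m"
    by blast
  then have "sum (strip_cost H w h) {m} = w m * H"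
    by (simp add: strip_cost_def)
  with m assms(3) show ?thesis
    by (intro exI[of _ "{m}"] exI[of _ "w m"] exI[of _ D]) fastforce
next
  case False
  then have "\<forall>i\<in>T. 0 < w i \<and> 0 < h i \<and> h i \<le> H/2"
    using assms(3) by force
  then obtain C j where C: "C \<subseteq> T" "C \<noteq> {}" "sum h C \<le> H" "j \<in> T - C" "\<forall>i\<in>T - C. w i \<le> w j"
      "w j * H \<le> sum (strip_cost H w h) C"
    using exists_short_column[of T H w h] assms(1,2,4) by blast
  moreover have "0 \<le> D" "0 \<le> w j"
    using C(4) assms(3) by force+
  ultimately show ?thesis
    using assms(3) by (intro exI[of _ C] exI[of _ D] exI[of _ "w j"]) auto
qed

lemma exists_packing_if_strip_cost_le:
  assumes "finite T" "0 < H" "\<forall>i\<in>T. 0 < w i \<and> w i \<le> D \<and> 0 < h i \<and> h i \<le> H"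
    and "sum (strip_cost H w h) T \<le> (W - D) * H"
  shows "\<exists>px py. is_packing w h px py T x0 (x0 + W) H"
  using assms
proof (induction T arbitrary: x0 W D rule: finite_psubset_induct)
  case (psubset T)
  have cost_nonneg: "0 \<le> sum (strip_cost H w h) S" if "S \<subseteq> T" for S
    using that psubset.prems(1,2) by (intro sum_nonneg strip_cost_nonneg) fastforce+
  show ?case
  proof (cases "sum h T \<le> H")
    case True
    have "0 \<le> (W - D) * H"
      using cost_nonneg[of T] psubset.prems(3) by auto
    then have "D \<le> W"
      using psubset.prems(1) by (simp add: zero_le_mult_iff)
    moreover obtain px py where "is_packing w h px py T x0 (x0 + D) H"
      using exists_column_packing[of T h w D H x0] psubset.hyps psubset.prems(2) True by fastforce
    ultimately show ?thesis
      by (meson add_left_mono is_packing_mono)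
  next
    case False
    then obtain C wc D' where C: "C \<subseteq> T" "C \<noteq> {}" "sum h C \<le> H" "0 \<le> wc" "\<forall>i\<in>C. w i \<le> wc"
        "0 \<le> D'" "\<forall>i\<in>T - C. w i \<le> D'" "(wc + D' - D) * H \<le> sum (strip_cost H w h) C"
      using exists_first_column[of T H w D h] psubset.hyps psubset.prems by auto
    have "sum (strip_cost H w h) (T - C) = sum (strip_cost H w h) T - sum (strip_cost H w h) C"
      using C(1) psubset.hyps by (simp add: sum_diff)
    also have "\<dots> \<le> (W - wc - D') * H"
      using C(8) psubset.prems(3) by (simp add: algebra_simps)
    finally have cost_rest: "sum (strip_cost H w h) (T - C) \<le> (W - wc - D') * H" .
    then have "0 \<le> (W - wc - D') * H"
      using cost_nonneg[of "T - C"] by auto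
    then have "wc \<le> W"
      using C(6) psubset.prems(1) by (simp add: zero_le_mult_iff)
    obtain px2 py2 where rest: "is_packing w h px2 py2 (T - C) (x0 + wc) (x0 + wc + (W - wc)) H"
      using psubset.IH[of "T - C" D' "W - wc" "x0 + wc"] C(1,2,7) cost_rest psubset.prems(1,2)
      by blast
    obtain px1 py1 where column: "is_packing w h px1 py1 C x0 (x0 + wc) H"
      using exists_column_packing[of C h w wc H x0] C(1,3,5) psubset.hyps psubset.prems(2)
      by (meson finite_subset less_imp_le subsetD)
    have "\<exists>px py. is_packing w h px py (C \<union> (T - C)) x0 (x0 + wc + (W - wc)) H"
      using is_packing_Un[OF column rest] C(4) \<open>wc \<le> W\<close> by auto
    moreover have "C \<union> (T - C) = T"
      using C(1) by blast
    ultimately show ?thesis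
      by simp
  qed
qed

lemma exists_large_subset_sum_le:
  fixes c :: "'a \<Rightarrow> real" and x B :: real
  assumes "finite M" "\<forall>i\<in>M. 0 \<le> c i \<and> c i \<le> B" "0 \<le> B" "0 \<le> x" "x \<le> 1"
  shows "\<exists>S\<subseteq>M. x * card M \<le> card S \<and> sum c S \<le> x * sum c M + B"
proof (cases "M = {}")
  case True
  with assms(3) show ?thesis by auto
next
  case False
  define n where "n = card M"
  define k where "k = nat \<lceil>x * n\<rceil>"
  have n_pos: "0 < n"
    using False assms(1) unfolding n_def by (simp add: card_gt_0_iff)
  have "real k = \<lceil>x * n\<rceil>"
    using assms(4) unfolding k_def by simp
  then have k_ge: "x * n \<le> k" and k_less: "k < x * n + 1"
    using ceiling_correct[of "x * n"] by linarith+
  have "k \<le> n"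
    using assms(5) n_pos unfolding k_def by (simp add: mult_left_le_one_le nat_le_iff ceiling_le_iff)
  then obtain S where S: "S \<subseteq> M" "card S = k" "n * sum c S \<le> k * sum c M"
    using exists_subset_card_eq_sum_le[OF assms(1), of k c] unfolding n_def by blast
  have sum_M: "0 \<le> sum c M" "sum c M \<le> n * B"
    using assms(2) sum_bounded_above[of M c B] unfolding n_def by (auto intro: sum_nonneg)
  have "n * sum c S \<le> k * sum c M"
    by (fact S(3))
  also have "\<dots> \<le> (x * n + 1) * sum c M"
    using k_less sum_M(1) by (intro mult_right_mono) auto
  also have "\<dots> \<le> n * (x * sum c M + B)"
    using sum_M(2) by (simp add: algebra_simps)
  finally have "n * sum c S \<le> n * (x * sum c M + B)" .
  then have "sum c S \<le> x * sum c M + B"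
    using n_pos by simp
  with S k_ge show ?thesis
    unfolding n_def by auto
qed

lemma sum_strip_cost_le_double_area:
  "\<forall>i\<in>M. 0 \<le> w i \<Longrightarrow> sum (strip_cost H w h) M \<le> 2 * area w h M"
  unfolding area_def sum_distrib_left by (intro sum_mono strip_cost_le_double_area) auto

lemma fraction_budget:
  fixes eps_s eps_a eps_small N c :: real
  assumes "0 < eps_s" "0 < eps_a" "eps_small \<le> eps_s / 2" "0 \<le> 1 - 2*eps_s - 2*eps_a"
    and "c \<le> (1 + 2*eps_a) * N^2"
  shows "(1 - 2*eps_s - 2*eps_a) * c + eps_small * N * N \<le> ((1 - eps_s) * N - eps_small * N) * N"
proof -
  have "(1 - 2*eps_s - 2*eps_a) * c \<le> (1 - 2*eps_s - 2*eps_a) * ((1 + 2*eps_a) * N^2)"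
    using assms(5,4) by (rule mult_left_mono)
  also have "\<dots> = ((1 - 2*eps_s) - 4 * eps_a * (eps_s + eps_a)) * N^2"
    by (simp add: algebra_simps)
  also have "\<dots> \<le> (1 - 2*eps_s) * N^2"
    using assms(1,2) by (intro mult_right_mono) auto
  finally have "(1 - 2*eps_s - 2*eps_a) * c \<le> (1 - 2*eps_s) * N^2" .
  moreover have "2 * eps_small * N^2 \<le> eps_s * N^2"
    using assms(3) by (intro mult_right_mono) auto
  ultimately show ?thesis
    by (simp add: power2_eq_square algebra_simps)
qed

theorem mainTheorem16:
  fixes M :: "'a set" and w h :: "'a \<Rightarrow> real"
    and N eps_s eps_a eps_small :: real
  assumes "0 < eps_s" "eps_s < 1/2"
    and "0 < eps_a" "eps_a < 1/2"
    and "0 < eps_small" "eps_small \<le> eps_s / 2"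
    and "finite M"
    and "\<And>i. i \<in> M \<Longrightarrow> 0 < w i \<and> 0 < h i"
    and "\<And>i. i \<in> M \<Longrightarrow> w i \<le> eps_small * N"
    and "\<And>i. i \<in> M \<Longrightarrow> h i \<le> N"
    and "area w h M \<le> (1/2 + eps_a) * N^2"
  shows "\<exists>S\<subseteq>M. real (card S) \<ge> (1 - 2*eps_s - 2*eps_a) * real (card M)
                \<and> packable w h S ((1 - eps_s) * N) N"
proof -
  define x where "x = 1 - 2*eps_s - 2*eps_a"
  define cost where "cost = strip_cost N w h"
  show ?thesis
  proof (cases "M = {} \<or> x < 0")
    case True
    then have "x * card M \<le> card {}"
      by (auto simp: mult_nonpos_nonneg)
    then show ?thesis
      unfolding x_def packable_def by blast
  next
    case False
    then obtain i0 where "i0 \<in> M" "0 \<le> x"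
      by auto
    then have N_pos: "0 < N"
      using assms(8,10) by force
    have "\<forall>i\<in>M. 0 \<le> cost i \<and> cost i \<le> eps_small * N * N"
      unfolding cost_def using assms(8,9) N_pos
      by (smt (verit) mult_right_mono strip_cost_le_width strip_cost_nonneg)
    then obtain S where S: "S \<subseteq> M" "x * card M \<le> card S" "sum cost S \<le> x * sum cost M + eps_small * N * N"
      using exists_large_subset_sum_le[OF assms(7), of cost "eps_small * N * N" x] \<open>0 \<le> x\<close>
        assms(1,3,5) N_pos unfolding x_def by auto
    have "sum cost M \<le> 2 * area w h M"
      using sum_strip_cost_le_double_area[of M w N h] assms(8) unfolding cost_def by force
    with S(3) have "sum cost S \<le> ((1 - eps_s) * N - eps_small * N) * N"
      using fraction_budget[of eps_s eps_a eps_small "sum cost M" N] assms(1,3,6,11) \<open>0 \<le> x\<close>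
      unfolding x_def by (simp add: algebra_simps)
    then have "\<exists>px py. is_packing w h px py S 0 (0 + (1 - eps_s) * N) N"
      using exists_packing_if_strip_cost_le[of S N w "eps_small * N" h "(1 - eps_s) * N" 0]
        S(1) assms(7-10) N_pos unfolding cost_def by (meson finite_subset subsetD)
    then show ?thesis
      using S(1,2) unfolding packable_iff_is_packing x_def by auto
  qed
qed

end
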